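(* If $T\in\mathcal{T}_3$ has $n\ge 30$ vertices then there is some internal vertex $v$ of $T$ with $|\mu(T)-\lambda(T,v)|<2$.
   Context: A leaf is a vertex of degree at most 1; an internal vertex has degree at least 2. $\mathcal{T}_3$ is the set of finite trees with at least one internal vertex in which every internal vertex has degree at least 3. A subtree is a nonempty vertex set inducing a connected subgraph. $\mu(T)$ is the average number of vertices over all subtrees of $T$, and $\lambda(T,v)$ is the average number of vertices over all subtrees of $T$ containing $v$. *)

theory Defs
  imports Complex_Main
begin

definition simple_graph :: "'a set \<Rightarrow> 'a set set \<Rightarrow> bool" where
  "simple_graph V E \<longleftrightarrow> finite V \<and>
     (\<forall>e\<in>E. \<exists>x y. e = {x, y} \<and> x \<noteq> y \<and> x \<in> V \<and> y \<in> V)"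

definition degree :: "'a set set \<Rightarrow> 'a \<Rightarrow> nat" where
  "degree E v = card {e\<in>E. v \<in> e}"

definition adj_in :: "'a set set \<Rightarrow> 'a set \<Rightarrow> ('a \<times> 'a) set" where
  "adj_in E S = {(x, y). {x, y} \<in> E \<and> x \<in> S \<and> y \<in> S}"

definition connected_in :: "'a set set \<Rightarrow> 'a set \<Rightarrow> bool" where
  "connected_in E S \<longleftrightarrow> S \<noteq> {} \<and> (\<forall>x\<in>S. \<forall>y\<in>S. (x, y) \<in> (adj_in E S)\<^sup>*)"

definition is_cycle :: "'a set set \<Rightarrow> 'a list \<Rightarrow> bool" where
  "is_cycle E cs \<longleftrightarrow> length cs \<ge> 3 \<and> distinct cs \<and>
     (\<forall>i. Suc i < length cs \<longrightarrow> {cs ! i, cs ! Suc i} \<in> E) \<and>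
     {last cs, hd cs} \<in> E"

definition is_tree :: "'a set \<Rightarrow> 'a set set \<Rightarrow> bool" where
  "is_tree V E \<longleftrightarrow> simple_graph V E \<and> connected_in E V \<and> \<not> (\<exists>cs. is_cycle E cs)"

definition internal :: "'a set set \<Rightarrow> 'a \<Rightarrow> bool" where
  "internal E v \<longleftrightarrow> degree E v \<ge> 2"

definition in_T3 :: "'a set \<Rightarrow> 'a set set \<Rightarrow> bool" where
  "in_T3 V E \<longleftrightarrow> is_tree V E \<and> (\<exists>v\<in>V. internal E v) \<and>
     (\<forall>v\<in>V. internal E v \<longrightarrow> degree E v \<ge> 3)"

definition subtrees :: "'a set \<Rightarrow> 'a set set \<Rightarrow> 'a set set" where
  "subtrees V E = {S. S \<subseteq> V \<and> connected_in E S}"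

definition mu :: "'a set \<Rightarrow> 'a set set \<Rightarrow> real" where
  "mu V E = (\<Sum>S\<in>subtrees V E. real (card S)) / real (card (subtrees V E))"

definition lambda_loc :: "'a set \<Rightarrow> 'a set set \<Rightarrow> 'a \<Rightarrow> real" where
  "lambda_loc V E v = (\<Sum>S\<in>{S\<in>subtrees V E. v \<in> S}. real (card S)) /
                      real (card {S\<in>subtrees V E. v \<in> S})"

end

theory Submission
  imports Defs "HOL-Library.Transitive_Closure_Table" "HOL-Library.FuncSet"
begin

(*
  A centroid v of T, i.e. a vertex no branch at which holds more than half of the n vertices,
  does the job. Since T has no vertex of degree 2, a branch B at v, rooted at the neighbour u of v,
  has a number a_B of subtrees containing u with (1 + a_B)^2 >= 2^(|B| + 1), and at most 2 a_B
  subtrees in total (induction over branches). Gluing rooted subtrees of the branches yields at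
  least prod_B (1 + a_B) subtrees through v, whereas a subtree avoiding v lies inside a single
  branch, so there are at most sum_B 2 a_B of those. As every branch holds at most half of T and v
  has degree at least 3, the product exceeds (n - 1) sum_B a_B once n >= 30. So fewer than a
  2/(n - 1) fraction of all subtrees avoid v, and since subtree orders lie in [1, n], dropping
  them shifts the average order by less than 2.
*)

section \<open>Arithmetic estimates\<close>

lemma one_plus_sum_le_prod:
  fixes a :: "'b \<Rightarrow> nat"
  assumes "finite U"
  shows "1 + (\<Sum>u\<in>U. a u) \<le> (\<Prod>u\<in>U. 1 + a u)"
  using assms
proof (induction rule: finite_induct)
  case (insert x U)
  then have "1 + (\<Sum>u\<in>insert x U. a u) \<le> (1 + a x) * (1 + (\<Sum>u\<in>U. a u))"
    by (simp add: algebra_simps)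
  also have "\<dots> \<le> (1 + a x) * (\<Prod>u\<in>U. 1 + a u)"
    using insert.IH by (rule mult_left_mono) simp
  finally show ?case using insert by simp
qed simp

lemma two_sum_le_prod:
  fixes a :: "'b \<Rightarrow> nat"
  assumes "finite U" and "2 \<le> card U" and "\<forall>u\<in>U. 1 \<le> a u"
  shows "2 * (\<Sum>u\<in>U. a u) \<le> (\<Prod>u\<in>U. 1 + a u)"
proof -
  obtain x where x: "x \<in> U" using assms(2) by fastforce
  define W where "W = U - {x}"
  have "card W \<noteq> 0" using assms(1,2) x by (simp add: W_def)
  then obtain y where "y \<in> W" by fastforce
  then have "1 \<le> (\<Sum>u\<in>W. a u)"
    using assms(1,3) member_le_sum[of y W a] by (auto simp: W_def)
  moreover have "1 \<le> a x" using assms(3) x by blast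
  ultimately have "2 * (a x + (\<Sum>u\<in>W. a u)) \<le> (1 + a x) * (1 + (\<Sum>u\<in>W. a u))"
    by (cases "a x"; cases "\<Sum>u\<in>W. a u") (simp_all add: algebra_simps)
  then have "2 * (\<Sum>u\<in>U. a u) \<le> (1 + a x) * (1 + (\<Sum>u\<in>W. a u))"
    using assms(1) x by (simp add: W_def sum.remove)
  also have "\<dots> \<le> (1 + a x) * (\<Prod>u\<in>W. 1 + a u)"
    using one_plus_sum_le_prod[of W a] assms(1) by (intro mult_left_mono) (simp_all add: W_def)
  also have "\<dots> = (\<Prod>u\<in>U. 1 + a u)"
    using assms(1) x by (simp add: W_def prod.remove)
  finally show ?thesis .
qed

lemma two_pow_sum_le_prod_square:
  fixes m a :: "'b \<Rightarrow> nat"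
  assumes "\<forall>u\<in>U. 2 ^ (m u + 1) \<le> (1 + a u)^2"
  shows "2 ^ (\<Sum>u\<in>U. m u + 1) \<le> (\<Prod>u\<in>U. 1 + a u)^2"
proof -
  have "(2::nat) ^ (\<Sum>u\<in>U. m u + 1) = (\<Prod>u\<in>U. 2 ^ (m u + 1))"
    by (simp add: power_sum)
  also have "\<dots> \<le> (\<Prod>u\<in>U. (1 + a u)^2)"
    using assms by (simp add: prod_mono)
  also have "\<dots> = (\<Prod>u\<in>U. 1 + a u)^2"
    by (simp add: prod_power_distrib)
  finally show ?thesis .
qed

lemma one_le_of_two_pow_le_square:
  fixes a m :: nat
  assumes "2 ^ (m + 1) \<le> (1 + a)^2"
  shows "1 \<le> a"
proof (rule ccontr)
  assume "\<not> 1 \<le> a"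
  then have "(1 + a)^2 = 1" by simp
  moreover have "1 < (2::nat) ^ (m + 1)" by (rule one_less_power) simp_all
  ultimately show False using assms by linarith
qed

lemma rooted_bounds_from_branches:
  fixes a b m :: "'b \<Rightarrow> nat"
  assumes "finite U" "card U \<noteq> 1"
    and "\<forall>u\<in>U. b u \<le> 2 * a u \<and> 2 ^ (m u + 1) \<le> (1 + a u)^2"
    and "t \<le> A + (\<Sum>u\<in>U. b u)" "(\<Prod>u\<in>U. 1 + a u) \<le> A" "N \<le> 1 + (\<Sum>u\<in>U. m u)"
  shows "t \<le> 2 * A \<and> 2 ^ (N + 1) \<le> (1 + A)^2"
proof (cases "U = {}")
  case True
  with assms(4-6) have "t \<le> A" "1 \<le> A" "N \<le> 1" by auto
  moreover have "(2::nat) ^ (N + 1) \<le> 2 ^ 2"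
    using \<open>N \<le> 1\<close> by (intro power_increasing) auto
  moreover have "(2::nat) ^ 2 \<le> (1 + A)^2"
    using \<open>1 \<le> A\<close> by (intro power_mono) auto
  ultimately show ?thesis by simp
next
  case False
  then have "card U \<noteq> 0" using assms(1) by simp
  with assms(2) have "2 \<le> card U" by linarith
  have "\<forall>u\<in>U. 1 \<le> a u" using assms(3) one_le_of_two_pow_le_square by blast
  have "(\<Sum>u\<in>U. b u) \<le> 2 * (\<Sum>u\<in>U. a u)"
    using assms(3) by (simp add: sum_distrib_left sum_mono)
  also have "\<dots> \<le> A"
    using two_sum_le_prod[OF assms(1) \<open>2 \<le> card U\<close> \<open>\<forall>u\<in>U. 1 \<le> a u\<close>] assms(5) by linarith
  finally have "t \<le> 2 * A" using assms(4) by linarith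
  have "(\<Sum>u\<in>U. m u + 1) = (\<Sum>u\<in>U. m u) + card U"
    by (simp only: sum.distrib) simp
  then have "N + 1 \<le> (\<Sum>u\<in>U. m u + 1)"
    using assms(6) \<open>2 \<le> card U\<close> by linarith
  then have "(2::nat) ^ (N + 1) \<le> 2 ^ (\<Sum>u\<in>U. m u + 1)"
    by (rule power_increasing) simp
  also have "\<dots> \<le> (\<Prod>u\<in>U. 1 + a u)^2"
    using assms(3) by (intro two_pow_sum_le_prod_square) blast
  also have "\<dots> \<le> (1 + A)^2"
    using assms(5) by (intro power_mono) auto
  finally show ?thesis using \<open>t \<le> 2 * A\<close> by blast
qed

lemma mult_sum_less_prod:
  fixes a :: "'b \<Rightarrow> nat"
  assumes "finite U" and "U \<noteq> {}" and "\<forall>u\<in>U. 1 \<le> a u"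
    and "\<forall>i\<in>U. card U * c < (\<Prod>u\<in>U - {i}. 1 + a u)"
  shows "c * (\<Sum>u\<in>U. a u) < (\<Prod>u\<in>U. 1 + a u)"
proof -
  have "card U * (c * (\<Sum>u\<in>U. a u)) = (\<Sum>i\<in>U. a i * (card U * c))"
    by (simp add: sum_distrib_left sum_distrib_right algebra_simps)
  also have "\<dots> < (\<Sum>i\<in>U. a i * (\<Prod>u\<in>U - {i}. 1 + a u))"
    using assms by (intro sum_strict_mono) auto
  also have "\<dots> \<le> (\<Sum>i\<in>U. \<Prod>u\<in>U. 1 + a u)"
    using assms(1) by (intro sum_mono) (simp add: prod.remove)
  also have "\<dots> = card U * (\<Prod>u\<in>U. 1 + a u)"
    by simp
  finally show ?thesis by simp
qed

lemma pow4_le_two_mult_four_pow: "3 \<le> k \<Longrightarrow> (k::nat)^4 \<le> 2 * 4^k"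
proof (induction k rule: nat_induct_at_least)
  case (Suc k)
  have "(3 * Suc k)^4 \<le> (4 * k)^4"
    using Suc by (intro power_mono) simp_all
  then have "81 * (Suc k)^4 \<le> 256 * k^4"
    by (simp only: power_mult_distrib) simp
  then have "(Suc k)^4 \<le> 4 * k^4"
    by linarith
  also have "\<dots> \<le> 4 * (2 * 4^k)"
    using Suc by simp
  finally show ?case by simp
qed simp

lemma two_mult_pow4_less_two_pow: "29 \<le> j \<Longrightarrow> 2 * (j::nat)^4 < 2^(j - 3)"
proof (induction j rule: nat_induct_at_least)
  case (Suc j)
  have "(10 * Suc j)^4 \<le> (11 * j)^4"
    using Suc by (intro power_mono) simp_all
  then have "10000 * (Suc j)^4 \<le> 14641 * j^4"
    by (simp only: power_mult_distrib) simp
  then have "2 * (Suc j)^4 \<le> 2 * (2 * j^4)"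
    by linarith
  also have "\<dots> < 2 * 2^(j - 3)"
    using Suc by simp
  also have "\<dots> = 2^(Suc j - 3)"
  proof -
    have "Suc j - 3 = Suc (j - 3)" using Suc by simp
    then show ?thesis by simp
  qed
  finally show ?case .
qed simp

(* The only estimate that needs n >= 30. *)
lemma pow4_less_two_pow:
  assumes "30 \<le> n" and "3 \<le> k"
  shows "((k::nat) * (n - 1))^4 < 2^(n + 2 * k - 4)"
proof -
  have "(k * (n - 1))^4 \<le> 4^k * (2 * (n - 1)^4)"
    using pow4_le_two_mult_four_pow[OF assms(2)] by (simp add: power_mult_distrib)
  also have "\<dots> < 4^k * 2^(n - 1 - 3)"
    using two_mult_pow4_less_two_pow[of "n - 1"] assms(1) by simp
  also have "\<dots> = 2^(n + 2 * k - 4)"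
  proof -
    have "n + 2 * k - 4 = 2 * k + (n - 1 - 3)" using assms by simp
    then show ?thesis by (simp add: power_add power_mult)
  qed
  finally show ?thesis .
qed

lemma card_mult_less_prod_remove:
  fixes m a :: "'b \<Rightarrow> nat"
  assumes "finite U" "i \<in> U" "3 \<le> card U" "30 \<le> n"
    and "n \<le> 1 + (\<Sum>u\<in>U. m u)" "2 * m i \<le> n"
    and "\<forall>u\<in>U. 2 ^ (m u + 1) \<le> (1 + a u)^2"
  shows "card U * (n - 1) < (\<Prod>u\<in>U - {i}. 1 + a u)"
proof -
  have "(\<Sum>u\<in>U. m u) = m i + (\<Sum>u\<in>U - {i}. m u)"
    using assms(1,2) by (simp add: sum.remove)
  moreover have "(\<Sum>u\<in>U - {i}. m u + 1) = (\<Sum>u\<in>U - {i}. m u) + (card U - 1)"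
    using assms(1,2) by (simp only: sum.distrib) simp
  ultimately have "n + 2 * card U - 4 \<le> 2 * (\<Sum>u\<in>U - {i}. m u + 1)"
    using assms(3-6) by linarith
  then have "(2::nat) ^ (n + 2 * card U - 4) \<le> (2 ^ (\<Sum>u\<in>U - {i}. m u + 1))^2"
    by (metis power_increasing power_mult mult.commute one_le_numeral)
  also have "\<dots> \<le> ((\<Prod>u\<in>U - {i}. 1 + a u)^2)^2"
    using assms(7) by (intro power_mono two_pow_sum_le_prod_square) auto
  finally have "(card U * (n - 1))^4 < (\<Prod>u\<in>U - {i}. 1 + a u)^4"
    using pow4_less_two_pow[OF assms(4,3)] by (simp flip: power_mult)
  then show ?thesis
    by (rule power_less_imp_less_base) simp
qed

lemma abs_ratio_diff_less_two:
  fixes N1 N2 R1 R2 n :: real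
  assumes "1 \<le> N1" "0 \<le> N2" "N1 \<le> R1" "R1 \<le> n * N1" "N2 \<le> R2" "R2 \<le> n * N2"
    and "(n - 1) * N2 < 2 * N1"
  shows "\<bar>(R1 + R2) / (N1 + N2) - R1 / N1\<bar> < 2"
proof -
  have pos: "0 < N1" "0 < N1 + N2" using assms(1,2) by auto
  have "\<bar>R2 * N1 - R1 * N2\<bar> \<le> ((n - 1) * N2) * N1"
  proof -
    have "R2 * N1 \<le> (n * N2) * N1" "N2 * N1 \<le> R2 * N1"
      using assms pos by (intro mult_right_mono; simp)+
    moreover have "N1 * N2 \<le> R1 * N2" "R1 * N2 \<le> (n * N1) * N2"
      using assms by (intro mult_right_mono; simp)+
    ultimately show ?thesis by (simp add: algebra_simps abs_le_iff)
  qed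
  also have "\<dots> < (2 * N1) * N1"
    using assms(7) pos(1) by (rule mult_strict_right_mono)
  also have "\<dots> \<le> 2 * ((N1 + N2) * N1)"
    using assms(2) pos by (simp add: algebra_simps)
  finally have "\<bar>R2 * N1 - R1 * N2\<bar> < 2 * ((N1 + N2) * N1)" .
  moreover have "(R1 + R2) / (N1 + N2) - R1 / N1 = (R2 * N1 - R1 * N2) / ((N1 + N2) * N1)"
    using pos by (simp add: field_simps)
  ultimately show ?thesis
    using pos by (simp add: abs_divide divide_less_eq)
qed

lemma abs_mean_union_diff_less_two:
  fixes f :: "'b \<Rightarrow> real"
  assumes "finite A" "finite B" "A \<inter> B = {}" "\<forall>x\<in>A \<union> B. 1 \<le> f x \<and> f x \<le> n"
    and "(n - 1) * card B < 2 * real (card A)"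
  shows "\<bar>(\<Sum>x\<in>A \<union> B. f x) / card (A \<union> B) - (\<Sum>x\<in>A. f x) / card A\<bar> < 2"
proof -
  have "card A \<noteq> 0"
  proof
    assume "card A = 0"
    with assms(5) have "B \<noteq> {}" "n < 1"
      by (auto simp: mult_less_0_iff)
    with assms(4) show False by force
  qed
  then have "1 \<le> real (card A)" by simp
  moreover have "real (card A) \<le> (\<Sum>x\<in>A. f x)" "(\<Sum>x\<in>A. f x) \<le> n * card A"
    "real (card B) \<le> (\<Sum>x\<in>B. f x)" "(\<Sum>x\<in>B. f x) \<le> n * card B"
    using sum_mono[of A "\<lambda>_. 1" f] sum_mono[of A f "\<lambda>_. n"]
      sum_mono[of B "\<lambda>_. 1" f] sum_mono[of B f "\<lambda>_. n"] assms(4)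
    by (auto simp: mult.commute)
  ultimately show ?thesis
    using abs_ratio_diff_less_two[OF _ _ _ _ _ _ assms(5)] assms(1-3)
    by (simp add: sum.union_disjoint card_Un_disjoint)
qed

section \<open>Induced subgraphs and subtrees\<close>

definition neighbours :: "'a set set \<Rightarrow> 'a set \<Rightarrow> 'a \<Rightarrow> 'a set" where
  "neighbours E X w = {y\<in>X. {w, y} \<in> E}"

definition branch :: "'a set set \<Rightarrow> 'a set \<Rightarrow> 'a \<Rightarrow> 'a \<Rightarrow> 'a set" where
  "branch E X v u = {w\<in>X - {v}. (u, w) \<in> (adj_in E (X - {v}))\<^sup>*}"

abbreviation subtrees_containing :: "'a set \<Rightarrow> 'a set set \<Rightarrow> 'a \<Rightarrow> 'a set set" where
  "subtrees_containing X E r \<equiv> {S\<in>subtrees X E. r \<in> S}"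

lemma sym_adj_in: "sym (adj_in E S)"
  by (auto simp: sym_def adj_in_def insert_commute)

lemma reachable_in_sym: "(x, y) \<in> (adj_in E S)\<^sup>* \<Longrightarrow> (y, x) \<in> (adj_in E S)\<^sup>*"
  by (rule symD[OF sym_rtrancl[OF sym_adj_in]])

lemma reachable_in_mem: "(x, y) \<in> (adj_in E S)\<^sup>* \<Longrightarrow> x = y \<or> x \<in> S \<and> y \<in> S"
  by (induction rule: rtrancl_induct) (auto simp: adj_in_def)

lemma reachable_in_mono:
  assumes "(x, y) \<in> (adj_in E S)\<^sup>*" and "S \<subseteq> T"
  shows "(x, y) \<in> (adj_in E T)\<^sup>*"
proof -
  have "adj_in E S \<subseteq> adj_in E T" using assms(2) by (auto simp: adj_in_def)
  then show ?thesis using rtrancl_mono assms(1) by blast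
qed

lemma reachable_within_reachable_part:
  "(x, y) \<in> (adj_in E S)\<^sup>* \<Longrightarrow> (x, y) \<in> (adj_in E {z\<in>S. (x, z) \<in> (adj_in E S)\<^sup>*})\<^sup>*"
proof (induction rule: rtrancl_induct)
  case (step y z)
  then have "(y, z) \<in> adj_in E {z\<in>S. (x, z) \<in> (adj_in E S)\<^sup>*}"
    by (auto simp: adj_in_def intro: rtrancl_into_rtrancl)
  with step.IH show ?case by (rule rtrancl_into_rtrancl)
qed simp

lemma connected_inI:
  assumes "r \<in> S" and "\<And>x. x \<in> S \<Longrightarrow> (r, x) \<in> (adj_in E S)\<^sup>*"
  shows "connected_in E S"
  unfolding connected_in_def
  using assms by (meson empty_iff reachable_in_sym rtrancl_trans)

lemma branch_subset: "branch E X v u \<subseteq> X - {v}"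
  by (auto simp: branch_def)

lemma finite_branch: "finite X \<Longrightarrow> finite (branch E X v u)"
  by (meson branch_subset finite_Diff finite_subset)

lemma finite_neighbours: "finite X \<Longrightarrow> finite (neighbours E X v)"
  by (simp add: neighbours_def)

lemma finite_subtrees: "finite X \<Longrightarrow> finite (subtrees X E)"
  by (rule finite_subset[of _ "Pow X"]) (auto simp: subtrees_def)

lemma card_subtree_bounds:
  assumes "finite X" "S \<in> subtrees X E"
  shows "1 \<le> card S" "card S \<le> card X"
proof -
  have "S \<subseteq> X" "S \<noteq> {}"
    using assms(2) by (auto simp: subtrees_def connected_in_def)
  with assms(1) show "1 \<le> card S" "card S \<le> card X"
    by (auto simp: Suc_le_eq card_gt_0_iff card_mono intro: finite_subset)
qed

lemma abs_mu_lambda_loc_less_two: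
  assumes "finite V"
    and "(card V - 1) * card {S\<in>subtrees V E. v \<notin> S} < 2 * card (subtrees_containing V E v)"
  shows "\<bar>mu V E - lambda_loc V E v\<bar> < 2"
proof -
  let ?A = "subtrees_containing V E v" and ?B = "{S\<in>subtrees V E. v \<notin> S}"
  have split: "subtrees V E = ?A \<union> ?B" by blast
  have "?A \<noteq> {}"
    using assms(2) by (metis card.empty mult_0_right not_less_zero)
  then have "V \<noteq> {}"
    by (auto simp: subtrees_def connected_in_def)
  then have "real (card V - 1) = real (card V) - 1"
    using assms(1) by (simp add: of_nat_diff Suc_le_eq card_gt_0_iff)
  then have "(real (card V) - 1) * card ?B < 2 * real (card ?A)"
    using assms(2) by (metis (no_types, lifting) of_nat_less_iff of_nat_mult of_nat_numeral)
  moreover have "\<forall>S\<in>?A \<union> ?B. 1 \<le> real (card S) \<and> real (card S) \<le> real (card V)"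
    using card_subtree_bounds[OF assms(1)] by fastforce
  ultimately have "\<bar>(\<Sum>S\<in>?A \<union> ?B. real (card S)) / card (?A \<union> ?B) -
      (\<Sum>S\<in>?A. real (card S)) / card ?A\<bar> < 2"
    using finite_subtrees[OF assms(1)]
    by (intro abs_mean_union_diff_less_two) auto
  then show ?thesis
    by (simp only: split[symmetric] mu_def lambda_loc_def)
qed

section \<open>Branches of a tree\<close>

locale tree_graph =
  fixes V :: "'a set" and E :: "'a set set"
  assumes is_tree: "is_tree V E"
begin

lemma finite_V: "finite V"
  using is_tree by (simp add: is_tree_def simple_graph_def)

lemma connected_V: "connected_in E V"
  using is_tree by (simp add: is_tree_def)

lemma edge_ends: "e \<in> E \<Longrightarrow> \<exists>x y. e = {x, y} \<and> x \<noteq> y \<and> x \<in> V \<and> y \<in> V"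
  using is_tree by (auto simp: is_tree_def simple_graph_def)

lemma doubleton_edge: "{a, b} \<in> E \<Longrightarrow> a \<noteq> b \<and> a \<in> V \<and> b \<in> V"
  using edge_ends by (fastforce simp: doubleton_eq_iff)

lemma degree_eq_card_neighbours:
  assumes "v \<in> V"
  shows "degree E v = card (neighbours E V v)"
proof -
  have "{e\<in>E. v \<in> e} = (\<lambda>y. {v, y}) ` neighbours E V v"
  proof (intro equalityI subsetI)
    fix e assume e: "e \<in> {e\<in>E. v \<in> e}"
    then obtain y where "e = {v, y}" "y \<in> V"
      using edge_ends[of e] by (auto simp: insert_commute)
    with e show "e \<in> (\<lambda>y. {v, y}) ` neighbours E V v"
      by (auto simp: neighbours_def)
  qed (auto simp: neighbours_def)
  moreover have "inj_on (\<lambda>y. {v, y}) (neighbours E V v)"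
    by (auto intro!: inj_onI simp: doubleton_eq_iff)
  ultimately show ?thesis
    by (simp add: degree_def card_image)
qed

lemma neighbours_not_reachable_avoiding:
  assumes "{v, u} \<in> E" "{v, u'} \<in> E" "u \<noteq> u'" "v \<notin> Y"
  shows "(u, u') \<notin> (adj_in E Y)\<^sup>*"
proof
  \<comment> \<open>otherwise v, u, ..., u' is a cycle\<close>
  let ?r = "\<lambda>a b. (a, b) \<in> adj_in E Y"
  assume "(u, u') \<in> (adj_in E Y)\<^sup>*"
  then have "?r\<^sup>*\<^sup>* u u'" by (simp add: rtranclp_rtrancl_eq)
  then obtain xs where "rtrancl_path ?r u xs u'"
    using rtranclp_eq_rtrancl_path by metis
  then obtain xs' where path: "rtrancl_path ?r u xs' u'" and dist: "distinct (u # xs')"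
    by (rule rtrancl_path_distinct)
  have "xs' \<noteq> []" using path assms(3) by (auto elim: rtrancl_path.cases)
  have step: "{(u # xs') ! j, xs' ! j} \<in> E" if "j < length xs'" for j
    using rtrancl_path_nth[OF path that] by (simp add: adj_in_def)
  have "set (u # xs') \<subseteq> Y"
    using rtrancl_path_nth[OF path, of 0] rtrancl_path_Range[OF path] \<open>xs' \<noteq> []\<close>
    by (auto simp: adj_in_def)
  have "is_cycle E (v # u # xs')"
    unfolding is_cycle_def
  proof (intro conjI allI impI)
    show "3 \<le> length (v # u # xs')" using \<open>xs' \<noteq> []\<close> by (cases xs') auto
    show "distinct (v # u # xs')" using dist \<open>set (u # xs') \<subseteq> Y\<close> assms(4) by auto
    show "{last (v # u # xs'), hd (v # u # xs')} \<in> E"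
      using rtrancl_path_last[OF path \<open>xs' \<noteq> []\<close>] assms(2) \<open>xs' \<noteq> []\<close>
      by (simp add: insert_commute)
    fix i assume "Suc i < length (v # u # xs')"
    then show "{(v # u # xs') ! i, (v # u # xs') ! Suc i} \<in> E"
      using assms(1) step by (cases i) auto
  qed
  then show False using is_tree by (auto simp: is_tree_def)
qed

lemma root_in_branch: "u \<in> neighbours E X v \<Longrightarrow> u \<in> branch E X v u"
  using doubleton_edge by (auto simp: neighbours_def branch_def)

lemma branch_unique:
  assumes "u \<in> neighbours E X v" "u' \<in> neighbours E X v"
    and "w \<in> branch E X v u" "w \<in> branch E X v u'"
  shows "u = u'"
proof (rule ccontr)
  assume "u \<noteq> u'"
  have "(u, w) \<in> (adj_in E (X - {v}))\<^sup>*" "(w, u') \<in> (adj_in E (X - {v}))\<^sup>*"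
    using assms(3,4) by (auto simp: branch_def intro: reachable_in_sym)
  then have "(u, u') \<in> (adj_in E (X - {v}))\<^sup>*" by (rule rtrancl_trans)
  with neighbours_not_reachable_avoiding[of v u u' "X - {v}"] assms(1,2) \<open>u \<noteq> u'\<close>
  show False by (auto simp: neighbours_def)
qed

lemma reaches_centre_through_branch:
  assumes "S \<subseteq> X" "v \<in> X" "(x, v) \<in> (adj_in E S)\<^sup>*" "x \<noteq> v"
  shows "\<exists>u\<in>neighbours E X v. x \<in> branch E X v u \<and>
           (x, u) \<in> (adj_in E (S \<inter> branch E X v u))\<^sup>*"
  using assms(3,4)
proof (induction rule: converse_rtrancl_induct)
  case (step x y)
  have xy: "x \<in> S" "y \<in> S" "{x, y} \<in> E" using step.hyps(1) by (auto simp: adj_in_def)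
  show ?case
  proof (cases "y = v")
    case True
    then have "x \<in> neighbours E X v"
      using xy assms(1) by (auto simp: neighbours_def insert_commute)
    then show ?thesis using root_in_branch by blast
  next
    case False
    then obtain u where u: "u \<in> neighbours E X v" "y \<in> branch E X v u"
        "(y, u) \<in> (adj_in E (S \<inter> branch E X v u))\<^sup>*"
      using step.IH by blast
    have "(u, y) \<in> (adj_in E (X - {v}))\<^sup>*" using u(2) by (simp add: branch_def)
    moreover have "(y, x) \<in> adj_in E (X - {v})"
      using xy step.prems False assms(1) by (auto simp: adj_in_def insert_commute)
    ultimately have "x \<in> branch E X v u"
      using xy step.prems assms(1) by (auto simp: branch_def intro: rtrancl_into_rtrancl)
    with u xy have "(x, u) \<in> (adj_in E (S \<inter> branch E X v u))\<^sup>*"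
      by (auto simp: adj_in_def intro: converse_rtrancl_into_rtrancl)
    with u(1) \<open>x \<in> branch E X v u\<close> show ?thesis by blast
  qed
qed simp

lemma branch_cover:
  assumes "connected_in E X" "v \<in> X" "w \<in> X" "w \<noteq> v"
  shows "\<exists>u\<in>neighbours E X v. w \<in> branch E X v u"
  using reaches_centre_through_branch[of X X v w] assms by (auto simp: connected_in_def)

lemma connected_branch:
  assumes "u \<in> neighbours E X v"
  shows "connected_in E (branch E X v u)"
proof (rule connected_inI)
  show "u \<in> branch E X v u" using assms by (rule root_in_branch)
  fix x assume "x \<in> branch E X v u"
  then have "(u, x) \<in> (adj_in E (X - {v}))\<^sup>*" by (simp add: branch_def)
  then show "(u, x) \<in> (adj_in E (branch E X v u))\<^sup>*"
    using reachable_within_reachable_part unfolding branch_def by fastforce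
qed

lemma neighbours_branch:
  assumes "w \<in> branch E X v u"
  shows "neighbours E (branch E X v u) w = neighbours E X w - {v}"
proof
  show "neighbours E (branch E X v u) w \<subseteq> neighbours E X w - {v}"
    using branch_subset by (fastforce simp: neighbours_def)
  show "neighbours E X w - {v} \<subseteq> neighbours E (branch E X v u) w"
  proof
    fix y assume y: "y \<in> neighbours E X w - {v}"
    have "(u, w) \<in> (adj_in E (X - {v}))\<^sup>*" using assms by (simp add: branch_def)
    moreover have "(w, y) \<in> adj_in E (X - {v})"
      using assms y by (auto simp: adj_in_def neighbours_def branch_def)
    ultimately show "y \<in> neighbours E (branch E X v u) w"
      using y by (auto simp: neighbours_def branch_def intro: rtrancl_into_rtrancl)
  qed
qed

lemma neighbours_branch_nonroot:
  assumes "u \<in> neighbours E X v" "w \<in> branch E X v u" "w \<noteq> u"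
  shows "neighbours E (branch E X v u) w = neighbours E X w"
proof -
  have "w \<notin> neighbours E X v"
    using branch_unique[OF _ assms(1) _ assms(2)] root_in_branch assms(3) by blast
  then have "v \<notin> neighbours E X w"
    using assms(2) branch_subset by (fastforce simp: neighbours_def insert_commute)
  then show ?thesis using neighbours_branch[OF assms(2)] by simp
qed

lemma branch_disjoint_reverse_branch:
  assumes "{v, u} \<in> E"
  shows "branch E V u v \<inter> branch E V v u = {}"
proof (rule equals0I)
  fix w assume "w \<in> branch E V u v \<inter> branch E V v u"
  then have w: "w \<in> branch E V u v" and w': "w \<in> branch E V v u" by auto
  have "v \<in> V" and u_nb: "u \<in> neighbours E V v"
    using assms doubleton_edge[OF assms] by (auto simp: neighbours_def)
  have "w \<noteq> u" "w \<noteq> v"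
    using w w' branch_subset[of E V u v] branch_subset[of E V v u] by blast+
  have "(v, w) \<in> (adj_in E (V - {u}))\<^sup>*" using w by (simp add: branch_def)
  then have "(w, v) \<in> (adj_in E (V - {u}))\<^sup>*" by (rule reachable_in_sym)
  then obtain u' where u': "u' \<in> neighbours E V v" "w \<in> branch E V v u'"
      "(w, u') \<in> (adj_in E ((V - {u}) \<inter> branch E V v u'))\<^sup>*"
    using reaches_centre_through_branch[of "V - {u}" V v w] \<open>v \<in> V\<close> \<open>w \<noteq> v\<close> by blast
  from reachable_in_mem[OF u'(3)] \<open>w \<noteq> u\<close> have "u' \<noteq> u" by auto
  with branch_unique[OF u_nb u'(1) w' u'(2)] show False by simp
qed

lemma branch_complement:
  assumes "{v, u} \<in> E"
  shows "branch E V u v = V - branch E V v u"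
proof -
  have "v \<in> V" "u \<noteq> v" using doubleton_edge[OF assms] by auto
  have u_nb: "u \<in> neighbours E V v" and v_nb: "v \<in> neighbours E V u"
    using assms doubleton_edge[OF assms] by (simp_all add: neighbours_def insert_commute)
  have "x \<in> branch E V u v" if x: "x \<in> V" "x \<notin> branch E V v u" for x
  proof (cases "x = v")
    case True
    then show ?thesis using root_in_branch[OF v_nb] by simp
  next
    case False
    then obtain u' where u': "u' \<in> neighbours E V v" "x \<in> branch E V v u'"
      using branch_cover[OF connected_V \<open>v \<in> V\<close> x(1)] by blast
    have "u' \<noteq> u" using u' x by auto
    then have "u \<notin> branch E V v u'"
      using branch_unique[OF u_nb u'(1) root_in_branch[OF u_nb]] by blast
    then have "branch E V v u' \<subseteq> V - {u}" using branch_subset[of E V v u'] by blast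
    moreover have "(u', x) \<in> (adj_in E (branch E V v u'))\<^sup>*"
      using connected_branch[OF u'(1)] root_in_branch[OF u'(1)] u'(2)
      by (simp add: connected_in_def)
    ultimately have "(u', x) \<in> (adj_in E (V - {u}))\<^sup>*" by (rule reachable_in_mono[rotated])
    moreover have "(v, u') \<in> adj_in E (V - {u})"
      using u' \<open>u' \<noteq> u\<close> \<open>u \<noteq> v\<close> \<open>v \<in> V\<close> by (auto simp: neighbours_def adj_in_def)
    ultimately show ?thesis
      using x root_in_branch[OF u_nb] by (auto simp: branch_def intro: converse_rtrancl_into_rtrancl)
  qed
  with branch_disjoint_reverse_branch[OF assms] show ?thesis
    using branch_subset[of E V u v] by blast
qed

lemma branch_beyond_heavy_branch_smaller:
  assumes "u \<in> neighbours E V v" "card V < 2 * card (branch E V v u)" "w \<in> neighbours E V u"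
  shows "card (branch E V u w) < card (branch E V v u)"
proof -
  have e: "{v, u} \<in> E" using assms(1) by (simp add: neighbours_def)
  have v_nb: "v \<in> neighbours E V u"
    using e doubleton_edge[OF e] by (simp add: neighbours_def insert_commute)
  show ?thesis
  proof (cases "w = v")
    case True
    have "card (branch E V u v) = card V - card (branch E V v u)"
      unfolding branch_complement[OF e]
      using finite_V branch_subset[of E V v u] by (intro card_Diff_subset) (auto intro: finite_branch)
    with True assms(2) show ?thesis by simp
  next
    case False
    have "branch E V u w \<subseteq> branch E V v u - {u}"
    proof
      fix x assume x: "x \<in> branch E V u w"
      then have "x \<notin> branch E V u v"
        using branch_unique[OF assms(3) v_nb] False by blast
      moreover have "x \<in> V - {u}" using x branch_subset[of E V u w] by blast
      ultimately show "x \<in> branch E V v u - {u}"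
        using branch_complement[OF e] by blast
    qed
    then have "card (branch E V u w) \<le> card (branch E V v u - {u})"
      using finite_branch[OF finite_V] by (simp add: card_mono)
    also have "\<dots> < card (branch E V v u)"
      using root_in_branch[OF assms(1)] finite_branch[OF finite_V] by (metis card_Diff1_less)
    finally show ?thesis .
  qed
qed

lemma centroid_exists:
  assumes "V \<noteq> {}"
  shows "\<exists>v\<in>V. \<forall>u\<in>neighbours E V v. 2 * card (branch E V v u) \<le> card V"
proof -
  define g where "g v = Max (insert 0 ((\<lambda>u. card (branch E V v u)) ` neighbours E V v))" for v
  have "finite (g ` V)" using finite_V by simp
  moreover have "g ` V \<noteq> {}" using assms by simp
  ultimately obtain v where v: "v \<in> V" "g v = Min (g ` V)"
    by (metis Min_in imageE)
  show ?thesis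
  proof (rule bexI[OF _ v(1)], rule ballI, rule ccontr)
    fix u assume u: "u \<in> neighbours E V v" and "\<not> 2 * card (branch E V v u) \<le> card V"
    then have "g u < card (branch E V v u)"
      using branch_beyond_heavy_branch_smaller[OF u] root_in_branch[OF u] finite_branch[OF finite_V]
      by (auto simp: g_def finite_neighbours[OF finite_V] card_gt_0_iff)
    also have "\<dots> \<le> g v"
      unfolding g_def using u by (intro Max_ge) (auto simp: finite_neighbours[OF finite_V])
    also have "\<dots> \<le> g u"
      using v \<open>finite (g ` V)\<close> u by (simp add: neighbours_def)
    finally show False by simp
  qed
qed

section \<open>Counting subtrees through a vertex\<close>

lemma subtrees_avoiding_subset:
  assumes "connected_in E X" "r \<in> X"
  shows "{S\<in>subtrees X E. r \<notin> S} \<subseteq> (\<Union>u\<in>neighbours E X r. subtrees (branch E X r u) E)"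
proof
  fix S assume "S \<in> {S\<in>subtrees X E. r \<notin> S}"
  then have SX: "S \<subseteq> X - {r}" and cS: "connected_in E S" by (auto simp: subtrees_def)
  obtain x where "x \<in> S" using cS by (auto simp: connected_in_def)
  then obtain u where u: "u \<in> neighbours E X r" "x \<in> branch E X r u"
    using branch_cover[OF assms] SX by blast
  have "S \<subseteq> branch E X r u"
  proof
    fix y assume "y \<in> S"
    with cS \<open>x \<in> S\<close> have "(x, y) \<in> (adj_in E S)\<^sup>*" by (simp add: connected_in_def)
    then have "(x, y) \<in> (adj_in E (X - {r}))\<^sup>*" using SX by (rule reachable_in_mono)
    moreover have "(u, x) \<in> (adj_in E (X - {r}))\<^sup>*" using u(2) by (simp add: branch_def)
    ultimately show "y \<in> branch E X r u"
      using \<open>y \<in> S\<close> SX by (auto simp: branch_def intro: rtrancl_trans)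
  qed
  with u(1) cS show "S \<in> (\<Union>u\<in>neighbours E X r. subtrees (branch E X r u) E)"
    by (auto simp: subtrees_def)
qed

lemma card_subtrees_avoiding_le:
  assumes "finite X" "connected_in E X" "r \<in> X"
  shows "card {S\<in>subtrees X E. r \<notin> S} \<le> (\<Sum>u\<in>neighbours E X r. card (subtrees (branch E X r u) E))"
proof -
  have "card {S\<in>subtrees X E. r \<notin> S} \<le> card (\<Union>u\<in>neighbours E X r. subtrees (branch E X r u) E)"
    using subtrees_avoiding_subset[OF assms(2,3)] assms(1)
    by (intro card_mono) (auto intro!: finite_subtrees finite_branch finite_neighbours)
  also have "\<dots> \<le> (\<Sum>u\<in>neighbours E X r. card (subtrees (branch E X r u) E))"
    using assms(1) by (intro card_UN_le finite_neighbours)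
  finally show ?thesis .
qed

lemma card_le_Suc_sum_card_branch:
  assumes "finite X" "connected_in E X" "r \<in> X"
  shows "card X \<le> 1 + (\<Sum>u\<in>neighbours E X r. card (branch E X r u))"
proof -
  have "X \<subseteq> insert r (\<Union>u\<in>neighbours E X r. branch E X r u)"
    using branch_cover[OF assms(2,3)] by blast
  then have "card X \<le> card (insert r (\<Union>u\<in>neighbours E X r. branch E X r u))"
    using assms(1) by (intro card_mono) (auto intro!: finite_branch finite_neighbours)
  also have "\<dots> \<le> 1 + card (\<Union>u\<in>neighbours E X r. branch E X r u)"
    by (simp add: card_insert_le_m1 card_insert_if)
  also have "\<dots> \<le> 1 + (\<Sum>u\<in>neighbours E X r. card (branch E X r u))"
    using card_UN_le[of "neighbours E X r" "branch E X r"] finite_neighbours[OF assms(1)] by simp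
  finally show ?thesis .
qed

lemma glued_subtree_inter_branch:
  assumes "u \<in> neighbours E X r" and "\<forall>u\<in>neighbours E X r. T u \<subseteq> branch E X r u"
  shows "insert r (\<Union>u\<in>neighbours E X r. T u) \<inter> branch E X r u = T u"
proof
  show "T u \<subseteq> insert r (\<Union>u\<in>neighbours E X r. T u) \<inter> branch E X r u"
    using assms by blast
  show "insert r (\<Union>u\<in>neighbours E X r. T u) \<inter> branch E X r u \<subseteq> T u"
  proof
    fix x assume x: "x \<in> insert r (\<Union>u\<in>neighbours E X r. T u) \<inter> branch E X r u"
    then have "x \<noteq> r" using branch_subset[of E X r u] by blast
    with x obtain u' where u': "u' \<in> neighbours E X r" "x \<in> T u'" by blast
    with assms(2) have "x \<in> branch E X r u'" by blast
    with branch_unique[OF assms(1) u'(1)] x have "u' = u" by blast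
    with u' show "x \<in> T u" by simp
  qed
qed

lemma glued_subtree_mem:
  assumes "r \<in> X"
    and "\<forall>u\<in>neighbours E X r. T u = {} \<or> T u \<in> subtrees_containing (branch E X r u) E u"
  shows "insert r (\<Union>u\<in>neighbours E X r. T u) \<in> subtrees_containing X E r"
proof -
  let ?S = "insert r (\<Union>u\<in>neighbours E X r. T u)"
  have "T u \<subseteq> X" if "u \<in> neighbours E X r" for u
    using that assms(2) branch_subset[of E X r u] by (auto simp: subtrees_def)
  then have "?S \<subseteq> X" using assms(1) by blast
  moreover have "connected_in E ?S"
  proof (rule connected_inI)
    fix x assume "x \<in> ?S"
    show "(r, x) \<in> (adj_in E ?S)\<^sup>*"
    proof (cases "x = r")
      case False
      with \<open>x \<in> ?S\<close> obtain u where u: "u \<in> neighbours E X r" "x \<in> T u" by blast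
      then have Tu: "T u \<in> subtrees_containing (branch E X r u) E u" using assms(2) by blast
      then have "(u, x) \<in> (adj_in E (T u))\<^sup>*"
        using u(2) by (simp add: subtrees_def connected_in_def)
      then have "(u, x) \<in> (adj_in E ?S)\<^sup>*" by (rule reachable_in_mono) (use u in blast)
      moreover have "(r, u) \<in> adj_in E ?S"
        using u Tu by (auto simp: neighbours_def adj_in_def)
      ultimately show ?thesis by (meson converse_rtrancl_into_rtrancl)
    qed simp
  qed simp
  ultimately show ?thesis by (simp add: subtrees_def)
qed

lemma prod_Suc_card_subtrees_branch_le:
  assumes "finite X" "r \<in> X"
  shows "(\<Prod>u\<in>neighbours E X r. 1 + card (subtrees_containing (branch E X r u) E u))
           \<le> card (subtrees_containing X E r)"
proof -
  let ?U = "neighbours E X r"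
  define Bs where "Bs u = insert {} (subtrees_containing (branch E X r u) E u)" for u
  let ?glue = "\<lambda>T. insert r (\<Union>u\<in>?U. T u)"
  have "card (Bs u) = 1 + card (subtrees_containing (branch E X r u) E u)" for u
    unfolding Bs_def using finite_subtrees[OF finite_branch[OF assms(1)]]
    by (subst card_insert_disjoint) auto
  then have "(\<Prod>u\<in>?U. 1 + card (subtrees_containing (branch E X r u) E u)) = card (PiE ?U Bs)"
    using finite_neighbours[OF assms(1)] by (simp add: card_PiE)
  also have "\<dots> \<le> card (subtrees_containing X E r)"
  proof (rule card_inj_on_le)
    have branch_parts: "\<forall>u\<in>?U. T u \<subseteq> branch E X r u" if "T \<in> PiE ?U Bs" for T
      using PiE_mem[OF that] by (auto simp: Bs_def subtrees_def)
    show "inj_on ?glue (PiE ?U Bs)"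
    proof (rule inj_onI)
      fix T T' assume T: "T \<in> PiE ?U Bs" and T': "T' \<in> PiE ?U Bs" and eq: "?glue T = ?glue T'"
      show "T = T'"
      proof (rule PiE_ext[OF T T'])
        fix u assume "u \<in> ?U"
        from glued_subtree_inter_branch[OF this branch_parts[OF T]]
          glued_subtree_inter_branch[OF this branch_parts[OF T']] eq
        show "T u = T' u" by simp
      qed
    qed
    show "?glue ` PiE ?U Bs \<subseteq> subtrees_containing X E r"
    proof
      fix S assume "S \<in> ?glue ` PiE ?U Bs"
      then obtain T where T: "T \<in> PiE ?U Bs" and S: "S = ?glue T" by blast
      show "S \<in> subtrees_containing X E r"
        unfolding S using PiE_mem[OF T] by (intro glued_subtree_mem[OF assms(2)]) (auto simp: Bs_def)
    qed
    show "finite (subtrees_containing X E r)"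
      using finite_subtrees[OF assms(1)] by simp
  qed
  finally show ?thesis .
qed

lemma branch_degree_conditions:
  assumes "finite X" "r \<in> X" "u \<in> neighbours E X r"
    and "\<forall>w\<in>X - {r}. card (neighbours E X w) \<noteq> 2"
  shows "card (neighbours E (branch E X r u) u) \<noteq> 1"
    and "\<forall>w\<in>branch E X r u - {u}. card (neighbours E (branch E X r u) w) \<noteq> 2"
proof -
  have u_branch: "u \<in> branch E X r u" using assms(3) by (rule root_in_branch)
  then have "u \<in> X - {r}" using branch_subset[of E X r u] by blast
  have "r \<in> neighbours E X u"
    using assms(2,3) by (simp add: neighbours_def insert_commute)
  then have "card (neighbours E X u - {r}) = card (neighbours E X u) - 1"
    "card (neighbours E X u) \<noteq> 0"
    using finite_neighbours[OF assms(1)] by auto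
  moreover have "card (neighbours E X u) \<noteq> 2" using assms(4) \<open>u \<in> X - {r}\<close> by blast
  ultimately show "card (neighbours E (branch E X r u) u) \<noteq> 1"
    unfolding neighbours_branch[OF u_branch] by linarith
  show "\<forall>w\<in>branch E X r u - {u}. card (neighbours E (branch E X r u) w) \<noteq> 2"
    using neighbours_branch_nonroot[OF assms(3)] assms(4) branch_subset[of E X r u] by auto
qed

(* The second bound is the exponential growth 2^((|X| + 1)/2) - 1 of the number of subtrees
   through r, squared to stay in nat. *)
lemma rooted_subtree_bounds:
  assumes "finite X" "connected_in E X" "r \<in> X" "card (neighbours E X r) \<noteq> 1"
    and "\<forall>w\<in>X - {r}. card (neighbours E X w) \<noteq> 2"
  shows "card (subtrees X E) \<le> 2 * card (subtrees_containing X E r) \<and>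
         2 ^ (card X + 1) \<le> (1 + card (subtrees_containing X E r))^2"
  using assms
proof (induction "card X" arbitrary: X r rule: less_induct)
  case less
  let ?U = "neighbours E X r"
  define a where "a u = card (subtrees_containing (branch E X r u) E u)" for u
  define b where "b u = card (subtrees (branch E X r u) E)" for u
  define m where "m u = card (branch E X r u)" for u
  have branch_bounds: "\<forall>u\<in>?U. b u \<le> 2 * a u \<and> 2 ^ (m u + 1) \<le> (1 + a u)^2"
  proof
    fix u assume u: "u \<in> ?U"
    have "branch E X r u \<subset> X"
      using branch_subset[of E X r u] less.prems(3) by blast
    then have "card (branch E X r u) < card X"
      by (rule psubset_card_mono[OF less.prems(1)])
    from less.hyps[OF this finite_branch[OF less.prems(1)] connected_branch[OF u]
        root_in_branch[OF u] branch_degree_conditions[OF less.prems(1,3) u less.prems(5)]]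
    show "b u \<le> 2 * a u \<and> 2 ^ (m u + 1) \<le> (1 + a u)^2" unfolding a_def b_def m_def .
  qed
  have "subtrees X E = subtrees_containing X E r \<union> {S\<in>subtrees X E. r \<notin> S}" by blast
  then have "card (subtrees X E) \<le> card (subtrees_containing X E r) + card {S\<in>subtrees X E. r \<notin> S}"
    by (rule ord_eq_le_trans[OF arg_cong[where f = card] card_Un_le])
  then have total: "card (subtrees X E) \<le> card (subtrees_containing X E r) + (\<Sum>u\<in>?U. b u)"
    using card_subtrees_avoiding_le[OF less.prems(1-3)] unfolding b_def by linarith
  have through: "(\<Prod>u\<in>?U. 1 + a u) \<le> card (subtrees_containing X E r)"
    unfolding a_def by (rule prod_Suc_card_subtrees_branch_le[OF less.prems(1,3)])
  have size: "card X \<le> 1 + (\<Sum>u\<in>?U. m u)"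
    unfolding m_def by (rule card_le_Suc_sum_card_branch[OF less.prems(1-3)])
  show ?case
    by (rule rooted_bounds_from_branches[OF finite_neighbours[OF less.prems(1)] less.prems(4)
          branch_bounds total through size])
qed

lemma branch_subtree_bounds:
  assumes "finite X" "r \<in> X" "u \<in> neighbours E X r"
    and "\<forall>w\<in>X - {r}. card (neighbours E X w) \<noteq> 2"
  shows "card (subtrees (branch E X r u) E) \<le> 2 * card (subtrees_containing (branch E X r u) E u) \<and>
         2 ^ (card (branch E X r u) + 1) \<le> (1 + card (subtrees_containing (branch E X r u) E u))^2"
  using rooted_subtree_bounds[OF finite_branch[OF assms(1)] connected_branch[OF assms(3)]
      root_in_branch[OF assms(3)] branch_degree_conditions[OF assms]] .

lemma centroid_degree_ge_two:
  assumes "v \<in> V" "\<forall>u\<in>neighbours E V v. 2 * card (branch E V v u) \<le> card V" "3 \<le> card V"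
  shows "2 \<le> card (neighbours E V v)"
proof (rule ccontr)
  let ?U = "neighbours E V v"
  assume "\<not> 2 \<le> card ?U"
  have "2 * (\<Sum>u\<in>?U. card (branch E V v u)) = (\<Sum>u\<in>?U. 2 * card (branch E V v u))"
    by (simp add: sum_distrib_left)
  also have "\<dots> \<le> card ?U * card V"
    using assms(2) sum_mono[of ?U "\<lambda>u. 2 * card (branch E V v u)" "\<lambda>_. card V"] by simp
  also have "\<dots> \<le> card V"
    using \<open>\<not> 2 \<le> card ?U\<close> by simp
  finally show False
    using card_le_Suc_sum_card_branch[OF finite_V connected_V assms(1)] assms(3) by linarith
qed

lemma centroid_few_avoiding_subtrees:
  assumes "v \<in> V" "\<forall>u\<in>neighbours E V v. 2 * card (branch E V v u) \<le> card V"
    and "\<forall>w\<in>V. card (neighbours E V w) \<noteq> 2" and "30 \<le> card V"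
  shows "(card V - 1) * card {S\<in>subtrees V E. v \<notin> S} < 2 * card (subtrees_containing V E v)"
proof -
  let ?U = "neighbours E V v" and ?n = "card V"
  define a where "a u = card (subtrees_containing (branch E V v u) E u)" for u
  define b where "b u = card (subtrees (branch E V v u) E)" for u
  define m where "m u = card (branch E V v u)" for u
  have fin_U: "finite ?U" by (rule finite_neighbours[OF finite_V])
  have bounds: "b u \<le> 2 * a u" "2 ^ (m u + 1) \<le> (1 + a u)^2" if "u \<in> ?U" for u
    using branch_subtree_bounds[OF finite_V assms(1) that] assms(3)
    unfolding a_def b_def m_def by auto
  have "2 \<le> card ?U"
    using centroid_degree_ge_two assms(1,2,4) by simp
  with assms(1,3) have "3 \<le> card ?U" by fastforce
  have "(?n - 1) * (\<Sum>u\<in>?U. a u) < (\<Prod>u\<in>?U. 1 + a u)"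
  proof (rule mult_sum_less_prod[OF fin_U])
    show "?U \<noteq> {}" using \<open>3 \<le> card ?U\<close> by auto
    show "\<forall>u\<in>?U. 1 \<le> a u" using bounds(2) one_le_of_two_pow_le_square by blast
    show "\<forall>i\<in>?U. card ?U * (?n - 1) < (\<Prod>u\<in>?U - {i}. 1 + a u)"
      using card_mult_less_prod_remove[OF fin_U _ \<open>3 \<le> card ?U\<close> assms(4)]
        card_le_Suc_sum_card_branch[OF finite_V connected_V assms(1)] assms(2) bounds(2)
      unfolding m_def by blast
  qed
  have "(?n - 1) * card {S\<in>subtrees V E. v \<notin> S} \<le> (?n - 1) * (\<Sum>u\<in>?U. b u)"
    unfolding b_def using card_subtrees_avoiding_le[OF finite_V connected_V assms(1)] by simp
  also have "\<dots> \<le> (?n - 1) * (2 * (\<Sum>u\<in>?U. a u))"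
    using bounds(1) by (simp add: sum_distrib_left sum_mono)
  also have "\<dots> < 2 * (\<Prod>u\<in>?U. 1 + a u)"
    using \<open>(?n - 1) * (\<Sum>u\<in>?U. a u) < (\<Prod>u\<in>?U. 1 + a u)\<close> by simp
  also have "\<dots> \<le> 2 * card (subtrees_containing V E v)"
    using prod_Suc_card_subtrees_branch_le[OF finite_V assms(1)] unfolding a_def by simp
  finally show ?thesis .
qed

end

theorem mainTheorem11:
  fixes V :: "'a set" and E :: "'a set set"
  assumes "in_T3 V E" and "card V \<ge> 30"
  shows "\<exists>v\<in>V. internal E v \<and> \<bar>mu V E - lambda_loc V E v\<bar> < 2"
proof -
  interpret tree_graph V E
    using assms(1) by unfold_locales (simp add: in_T3_def)
  have no_degree_two: "\<forall>w\<in>V. card (neighbours E V w) \<noteq> 2"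
    using assms(1) by (force simp: in_T3_def internal_def degree_eq_card_neighbours)
  obtain v where v: "v \<in> V" "\<forall>u\<in>neighbours E V v. 2 * card (branch E V v u) \<le> card V"
    using centroid_exists assms(2) by fastforce
  have "internal E v"
    using centroid_degree_ge_two[OF v] assms(2)
    by (simp add: internal_def degree_eq_card_neighbours[OF v(1)])
  moreover have "\<bar>mu V E - lambda_loc V E v\<bar> < 2"
    using abs_mu_lambda_loc_less_two[OF finite_V]
      centroid_few_avoiding_subtrees[OF v no_degree_two assms(2)] .
  ultimately show ?thesis using v(1) by blast
qed

end
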